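(* Let $S(p)$ be an oriented polyhedral $2$-surface in $\mathbb{R}^3$ with vertices $p_i$ that is projectively non-degenerate, and let $\pi$ be a proper projection plane for $S(p)$. Let $G_S(\bar p)$ be the projection-framework of $S(p)$ to $\pi$, with projection-coefficients $\beta_i$, and let $\bar\omega_{ij}=\beta_i\beta_j\omega_{ij}$ be the projection-stress coefficients, where $\omega_{ij}$ are the projective lifting coefficients associated to $S$. Then $\bar\omega$ is a self-stress of $G_S(\bar p)$, i.e. for every vertex $\bar p_i$, \[ \sum_{j:\ p_ip_j \text{ an edge of } S}\bar\omega_{ij}\,(\bar p_i-\bar p_j)=0 . \]
   Context: $O$ denotes the origin of $\mathbb{R}^3$; points are identified with vectors; $\det(u,v,w)$ is the determinant of the matrix with columns $u,v,w$; ${\rm span}$ denotes minimal affine span. For points $p_1,\dots,p_4$ with ${\rm span}(p_1,p_2,p_3)$ and ${\rm span}(p_1,p_2,p_4)$ two-dimensional and not containing $O$, set $\omega(p_1,p_2;p_3,p_4)=\det(p_2-p_1,p_3-p_1,p_4-p_1)/(\det(p_1,p_2,p_3)\det(p_1,p_2,p_4))$; this depends only on $p_1,p_2$ and the two planes. An oriented polyhedral surface $S(p)$ is projectively non-degenerate if the affine planes spanned by its (planar polygonal) faces do not contain $O$. An affine plane $\pi$ is a proper projection plane for $S(p)$ if $O\notin\pi$ and for every vertex $p_i$ the line ${\rm span}(O,p_i)$ is not parallel to $\pi$. The projection-framework $G_S(\bar p)$ has vertices $\bar p_i={\rm span}(O,p_i)\cap\pi$ and edges $\bar p_i\bar p_j$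 for the edges $p_ip_j$ of $S$; the projection-coefficient $\beta_i$ is the scalar with $p_i=\beta_i\bar p_i$. For an edge oriented as $\overrightarrow{p_ip_j}$, the orientation of $S$ determines a left face and a right face adjacent to it; choose a point $p_k$ of the right face not on the edge line and a point $p_l$ of the left face not on the edge line, and set $\omega_{ij}=\omega(p_i,p_j;p_k,p_l)$ (this is independent of the choices and of the orientation of the edge, so $\omega_{ij}=\omega_{ji}$); these are the projective lifting coefficients associated to $S$. *)

theory Defs
  imports "HOL-Analysis.Analysis"
begin

type_synonym pt = "real ^ 3"

definition det3 :: "pt \<Rightarrow> pt \<Rightarrow> pt \<Rightarrow> real" where
  "det3 u v w = det (\<chi> r c. (if c = 1 then u else if c = 2 then v else w) $ r :: real^3^3)"

definition omega :: "pt \<Rightarrow> pt \<Rightarrow> pt \<Rightarrow> pt \<Rightarrow> real" where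
  "omega p1 p2 p3 p4 =
     det3 (p2 - p1) (p3 - p1) (p4 - p1) / (det3 p1 p2 p3 * det3 p1 p2 p4)"

text \<open>A face is a list of vertex indices in cyclic order (the orientation).
  Its directed edges are the cyclically consecutive pairs.\<close>
definition cyc_edges :: "nat list \<Rightarrow> (nat \<times> nat) set" where
  "cyc_edges f = set (zip f (rotate1 f))"

definition und_edges :: "nat list \<Rightarrow> nat set set" where
  "und_edges f = {{a, b} | a b. (a, b) \<in> cyc_edges f}"

definition verts :: "nat list set \<Rightarrow> nat set" where
  "verts F = \<Union> (set ` F)"

definition edges :: "nat list set \<Rightarrow> (nat \<times> nat) set" where
  "edges F = (\<Union>f\<in>F. cyc_edges f)"

definition face_ok :: "(nat \<Rightarrow> pt) \<Rightarrow> nat list \<Rightarrow> bool" where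
  "face_ok p f \<longleftrightarrow> distinct f \<and> length f \<ge> 3 \<and> aff_dim (p ` set f) = 2"

definition adj_at :: "nat list set \<Rightarrow> nat \<Rightarrow> nat list \<Rightarrow> nat list \<Rightarrow> bool" where
  "adj_at F v f g \<longleftrightarrow> f \<in> F \<and> g \<in> F \<and> v \<in> set f \<and> v \<in> set g \<and>
      (\<exists>u. {v, u} \<in> und_edges f \<inter> und_edges g)"

text \<open>Oriented closed polyhedral 2-surface with vertex positions p and oriented faces F:
  every directed edge lies in exactly one face, its reverse lies in (exactly) one other face
  (so every edge has exactly two faces, inducing opposite orientations), and the faces around
  each vertex form a single edge-connected star.\<close>
definition oriented_poly_surface :: "(nat \<Rightarrow> pt) \<Rightarrow> nat list set \<Rightarrow> bool" where
  "oriented_poly_surface p F \<longleftrightarrow>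
     finite F \<and> F \<noteq> {} \<and>
     (\<forall>f\<in>F. face_ok p f) \<and>
     inj_on p (verts F) \<and>
     (\<forall>f\<in>F. \<forall>g\<in>F. \<forall>e. e \<in> cyc_edges f \<and> e \<in> cyc_edges g \<longrightarrow> f = g) \<and>
     (\<forall>f\<in>F. \<forall>i j. (i, j) \<in> cyc_edges f \<longrightarrow> (\<exists>g\<in>F. (j, i) \<in> cyc_edges g)) \<and>
     (\<forall>v\<in>verts F. \<forall>f\<in>F. \<forall>g\<in>F. v \<in> set f \<and> v \<in> set g \<longrightarrow> (adj_at F v)\<^sup>*\<^sup>* f g)"

definition proj_nondegenerate :: "(nat \<Rightarrow> pt) \<Rightarrow> nat list set \<Rightarrow> bool" where
  "proj_nondegenerate p F \<longleftrightarrow> (\<forall>f\<in>F. 0 \<notin> affine hull (p ` set f))"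

definition affine_plane :: "pt set \<Rightarrow> bool" where
  "affine_plane P \<longleftrightarrow> affine P \<and> aff_dim P = 2"

definition direction :: "pt set \<Rightarrow> pt set" where
  "direction P = {x - y | x y. x \<in> P \<and> y \<in> P}"

definition proper_projection_plane :: "(nat \<Rightarrow> pt) \<Rightarrow> nat list set \<Rightarrow> pt set \<Rightarrow> bool" where
  "proper_projection_plane p F P \<longleftrightarrow>
     affine_plane P \<and> 0 \<notin> P \<and>
     (\<forall>i\<in>verts F. \<not> (direction (affine hull {0, p i}) \<subseteq> direction P))"

definition proj_pt :: "pt set \<Rightarrow> pt \<Rightarrow> pt" where
  "proj_pt P q = (THE x. x \<in> affine hull {0, q} \<and> x \<in> P)"

definition proj_coeff :: "pt set \<Rightarrow> pt \<Rightarrow> real" where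
  "proj_coeff P q = (THE b. q = b *\<^sub>R proj_pt P q)"

definition left_face :: "nat list set \<Rightarrow> nat \<Rightarrow> nat \<Rightarrow> nat list" where
  "left_face F i j = (THE f. f \<in> F \<and> (i, j) \<in> cyc_edges f)"

definition right_face :: "nat list set \<Rightarrow> nat \<Rightarrow> nat \<Rightarrow> nat list" where
  "right_face F i j = (THE f. f \<in> F \<and> (j, i) \<in> cyc_edges f)"

definition lift_coeff :: "(nat \<Rightarrow> pt) \<Rightarrow> nat list set \<Rightarrow> nat \<Rightarrow> nat \<Rightarrow> real" where
  "lift_coeff p F i j =
     (let k = (SOME k. k \<in> set (right_face F i j) \<and> p k \<notin> affine hull {p i, p j});
          l = (SOME l. l \<in> set (left_face F i j) \<and> p l \<notin> affine hull {p i, p j})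
      in omega (p i) (p j) (p k) (p l))"

end

(* Every face plane avoids O, so it is {x. n \<bullet> x = 1} for a pole n. Across the edge p_i p_j
   the poles of the right and the left face differ by omega_ij (p_i \<times> p_j); around p_i every
   face is once a right and once a left face of an outgoing edge, so the sum of
   omega_ij (p_i \<times> p_j) over the neighbours j vanishes. If the projection plane is
   {x. m \<bullet> x = 1}, then beta_i = m \<bullet> p_i and pbar_i = p_i / beta_i, hence
   beta_i beta_j (pbar_i - pbar_j) = m \<times> (p_i \<times> p_j), and the stress equation at p_i is
   m \<times> 0 = 0. *)

theory Submission
  imports Defs
begin

unbundle cross3_syntax

lemma det3_eq_inner_cross: "det3 u v w = u \<bullet> (v \<times> w)"
  unfolding det3_def by (simp add: cross3_simps)

lemma det3_scaleR_eq_sum_cross: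
  "det3 a b c *\<^sub>R n = (n \<bullet> a) *\<^sub>R (b \<times> c) + (n \<bullet> b) *\<^sub>R (c \<times> a) + (n \<bullet> c) *\<^sub>R (a \<times> b)"
  unfolding det3_eq_inner_cross by (simp add: cross3_simps forall_3)

lemma det3_scaleR_pole:
  assumes "n \<bullet> a = 1" "n \<bullet> b = 1" "n \<bullet> c = 1"
  shows "det3 a b c *\<^sub>R n = (b - a) \<times> (c - a)"
  unfolding det3_scaleR_eq_sum_cross assms
  by (simp add: Cross3.left_diff_distrib Cross3.right_diff_distrib
      cross_skew[of b a] cross_skew[of a c])

lemma det3_diff_cross_identity:
  "det3 a b l *\<^sub>R ((b - a) \<times> (k - a)) - det3 a b k *\<^sub>R ((b - a) \<times> (l - a))
     = det3 (b - a) (k - a) (l - a) *\<^sub>R (a \<times> b)"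
  unfolding det3_eq_inner_cross by (simp add: cross3_simps forall_3)

lemma cross_diff_eq_0_iff:
  fixes a b c :: "real^3"
  assumes "a \<noteq> b"
  shows "(b - a) \<times> (c - a) = 0 \<longleftrightarrow> c \<in> affine hull {a, b}"
proof -
  have "(b - a) \<times> (c - a) = 0 \<longleftrightarrow> collinear {b, a, c}"
    by (simp add: cross_eq_0 collinear_3[of b a c])
  also have "\<dots> \<longleftrightarrow> c \<in> affine hull {a, b}"
    by (simp add: insert_commute collinear_3_affine_hull[OF assms])
  finally show ?thesis .
qed

lemma det3_neq_0_off_line:
  assumes "n \<bullet> a = 1" "n \<bullet> b = 1" "n \<bullet> c = 1" "a \<noteq> b" "c \<notin> affine hull {a, b}"
  shows "det3 a b c \<noteq> 0"
proof
  assume "det3 a b c = 0"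
  then have "(b - a) \<times> (c - a) = 0"
    using det3_scaleR_pole[OF assms(1-3)] by simp
  then show False
    using cross_diff_eq_0_iff[OF assms(4)] assms(5) by simp
qed

lemma omega_scaleR_cross:
  assumes R: "nR \<bullet> a = 1" "nR \<bullet> b = 1" "nR \<bullet> k = 1"
    and L: "nL \<bullet> a = 1" "nL \<bullet> b = 1" "nL \<bullet> l = 1"
    and dk: "det3 a b k \<noteq> 0" and dl: "det3 a b l \<noteq> 0"
  shows "omega a b k l *\<^sub>R (a \<times> b) = nR - nL"
proof -
  let ?D = "det3 a b k * det3 a b l" and ?X = "det3 (b - a) (k - a) (l - a)"
  have "?D *\<^sub>R (nR - nL)
      = det3 a b l *\<^sub>R (det3 a b k *\<^sub>R nR) - det3 a b k *\<^sub>R (det3 a b l *\<^sub>R nL)"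
    by (simp add: algebra_simps)
  also have "\<dots> = ?X *\<^sub>R (a \<times> b)"
    using det3_diff_cross_identity
    by (simp only: det3_scaleR_pole[OF R] det3_scaleR_pole[OF L])
  finally have jump: "?D *\<^sub>R (nR - nL) = ?X *\<^sub>R (a \<times> b)" .
  have "omega a b k l *\<^sub>R (a \<times> b) = (1 / ?D) *\<^sub>R (?X *\<^sub>R (a \<times> b))"
    by (simp add: omega_def)
  also have "\<dots> = (1 / ?D) *\<^sub>R (?D *\<^sub>R (nR - nL))"
    by (simp only: jump)
  also have "\<dots> = nR - nL"
    using dk dl by simp
  finally show ?thesis .
qed

lemma hyperplane_avoiding_origin:
  fixes S :: "'a::euclidean_space set"
  assumes "aff_dim S = DIM('a) - 1" and "0 \<notin> affine hull S"
  obtains n where "n \<noteq> 0" and "affine hull S = {x. n \<bullet> x = 1}"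
proof -
  obtain a b where "a \<noteq> 0" and hull: "affine hull S = {x. a \<bullet> x = b}"
    using aff_dim_eq_hyperplane assms(1) by blast
  moreover have "b \<noteq> 0"
    using assms(2) hull by auto
  ultimately show thesis
    using that[of "a /\<^sub>R b"] by (auto simp: field_simps)
qed

lemma exists_off_line:
  fixes S :: "'a::euclidean_space set"
  assumes "1 < aff_dim S"
  obtains x where "x \<in> S" and "x \<notin> affine hull {a, b}"
proof -
  have "\<not> S \<subseteq> affine hull {a, b}"
    using aff_dim_subset[of S "affine hull {a, b}"] assms by (auto split: if_splits)
  then show thesis
    using that by blast
qed

lemma inner_neq_0_if_not_parallel:
  fixes m q :: pt
  assumes "m \<noteq> 0" and "\<not> direction (affine hull {0, q}) \<subseteq> direction {x. m \<bullet> x = 1}"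
  shows "m \<bullet> q \<noteq> 0"
proof
  assume "m \<bullet> q = 0"
  define x0 where "x0 = (1 / (m \<bullet> m)) *\<^sub>R m"
  have x0: "m \<bullet> x0 = 1"
    using assms(1) by (simp add: x0_def)
  have "direction (affine hull {0, q}) \<subseteq> direction {x. m \<bullet> x = 1}"
  proof
    fix d assume "d \<in> direction (affine hull {0, q})"
    then obtain u v u' v' where "d = (u *\<^sub>R 0 + v *\<^sub>R q) - (u' *\<^sub>R 0 + v' *\<^sub>R q)"
      unfolding direction_def affine_hull_2 by blast
    then have "m \<bullet> d = 0"
      using \<open>m \<bullet> q = 0\<close> by (simp add: inner_diff_right)
    then have "x0 + d \<in> {x. m \<bullet> x = 1}" and "x0 \<in> {x. m \<bullet> x = 1}"
      using x0 by (simp_all add: inner_add_right)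
    then show "d \<in> direction {x. m \<bullet> x = 1}"
      unfolding direction_def by force
  qed
  then show False
    using assms(2) by contradiction
qed

lemma proj_pt_hyperplane:
  assumes "m \<bullet> q \<noteq> 0"
  shows "proj_pt {x. m \<bullet> x = 1} q = (1 / (m \<bullet> q)) *\<^sub>R q"
  unfolding proj_pt_def
proof (rule the_equality)
  have "(1 / (m \<bullet> q)) *\<^sub>R q = (1 - 1 / (m \<bullet> q)) *\<^sub>R 0 + (1 / (m \<bullet> q)) *\<^sub>R q"
    by simp
  then show "(1 / (m \<bullet> q)) *\<^sub>R q \<in> affine hull {0, q} \<and> (1 / (m \<bullet> q)) *\<^sub>R q \<in> {x. m \<bullet> x = 1}"
    using assms unfolding affine_hull_2 by fastforce
next
  fix x assume "x \<in> affine hull {0, q} \<and> x \<in> {x. m \<bullet> x = 1}"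
  then obtain u v where x: "x = u *\<^sub>R 0 + v *\<^sub>R q" and "m \<bullet> x = 1"
    unfolding affine_hull_2 by blast
  then have "v * (m \<bullet> q) = 1"
    by simp
  with x show "x = (1 / (m \<bullet> q)) *\<^sub>R q"
    using assms by (simp add: field_simps)
qed

lemma proj_coeff_hyperplane:
  assumes "m \<bullet> q \<noteq> 0"
  shows "proj_coeff {x. m \<bullet> x = 1} q = m \<bullet> q"
  unfolding proj_coeff_def proj_pt_hyperplane[OF assms]
proof (rule the_equality)
  show "q = (m \<bullet> q) *\<^sub>R (1 / (m \<bullet> q)) *\<^sub>R q"
    using assms by simp
next
  fix b assume "q = b *\<^sub>R (1 / (m \<bullet> q)) *\<^sub>R q"
  then have "(1 - b / (m \<bullet> q)) *\<^sub>R q = 0"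
    by (simp add: algebra_simps)
  moreover have "q \<noteq> 0"
    using assms by auto
  ultimately show "b = m \<bullet> q"
    using assms by (simp add: field_simps)
qed

lemma proj_coeff_mult_proj_pt_diff:
  assumes "m \<bullet> a \<noteq> 0" and "m \<bullet> b \<noteq> 0"
  shows "(proj_coeff {x. m \<bullet> x = 1} a * proj_coeff {x. m \<bullet> x = 1} b) *\<^sub>R
           (proj_pt {x. m \<bullet> x = 1} a - proj_pt {x. m \<bullet> x = 1} b) = m \<times> (a \<times> b)"
  using assms
  by (simp add: proj_pt_hyperplane proj_coeff_hyperplane Lagrange scaleR_diff_right)

lemma cyc_edges_subset: "(a, b) \<in> cyc_edges f \<Longrightarrow> a \<in> set f \<and> b \<in> set f"
  unfolding cyc_edges_def by (auto dest: set_zip_leftD set_zip_rightD)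

lemma cyc_edges_out_exists:
  assumes "a \<in> set f"
  obtains b where "(a, b) \<in> cyc_edges f"
  using in_set_impl_in_set_zip1[of f "rotate1 f" a] assms by (auto simp: cyc_edges_def)

lemma cyc_edges_in_exists:
  assumes "b \<in> set f"
  obtains a where "(a, b) \<in> cyc_edges f"
  using in_set_impl_in_set_zip2[of f "rotate1 f" b] assms by (auto simp: cyc_edges_def)

lemma cyc_edges_out_unique:
  assumes "distinct f" "(a, b) \<in> cyc_edges f" "(a, b') \<in> cyc_edges f"
  shows "b = b'"
proof -
  have "inj_on fst (cyc_edges f)"
    using assms(1) distinct_map[of fst "zip f (rotate1 f)"] by (simp add: cyc_edges_def)
  from inj_onD[OF this _ assms(2,3)] show ?thesis
    by simp
qed

lemma cyc_edges_in_unique: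
  assumes "distinct f" "(a, b) \<in> cyc_edges f" "(a', b) \<in> cyc_edges f"
  shows "a = a'"
proof -
  have "inj_on snd (cyc_edges f)"
    using assms(1) distinct_map[of snd "zip f (rotate1 f)"] by (simp add: cyc_edges_def)
  from inj_onD[OF this _ assms(2,3)] show ?thesis
    by simp
qed

lemma cyc_edges_neq:
  assumes "distinct f" "2 \<le> length f" "(a, b) \<in> cyc_edges f"
  shows "a \<noteq> b"
proof -
  obtain n where n: "n < length f" "a = f ! n" "b = f ! (Suc n mod length f)"
    using assms(3) by (auto simp: cyc_edges_def set_zip nth_rotate1)
  moreover have "Suc n mod length f \<noteq> n"
    using n(1) assms(2) by (cases "Suc n = length f") auto
  moreover have "Suc n mod length f < length f"
    by (rule mod_less_divisor) (use n(1) in linarith)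
  ultimately show ?thesis
    using assms(1) by (simp add: nth_eq_iff_index_eq)
qed

definition face_pole :: "(nat \<Rightarrow> pt) \<Rightarrow> nat list \<Rightarrow> pt" where
  "face_pole p f = (SOME n. \<forall>v\<in>set f. n \<bullet> p v = 1)"

lemma inner_face_pole:
  assumes "face_ok p f" and "0 \<notin> affine hull (p ` set f)" and "v \<in> set f"
  shows "face_pole p f \<bullet> p v = 1"
proof -
  have "aff_dim (p ` set f) = DIM(pt) - 1"
    using assms(1) by (simp add: face_ok_def)
  then obtain n where "affine hull (p ` set f) = {x. n \<bullet> x = 1}"
    using hyperplane_avoiding_origin assms(2) by blast
  then have "\<forall>v\<in>set f. n \<bullet> p v = 1"
    using hull_inc[of _ "p ` set f"] by blast
  then have "\<forall>v\<in>set f. face_pole p f \<bullet> p v = 1"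
    unfolding face_pole_def by (rule someI)
  then show ?thesis
    using assms(3) by blast
qed

lemma edges_verts: "(i, j) \<in> edges F \<Longrightarrow> i \<in> verts F \<and> j \<in> verts F"
  unfolding edges_def verts_def by (blast dest: cyc_edges_subset)

context
  fixes p :: "nat \<Rightarrow> pt" and F :: "nat list set"
  assumes surface: "oriented_poly_surface p F"
begin

lemma face_ok_if_face: "f \<in> F \<Longrightarrow> face_ok p f"
  using surface unfolding oriented_poly_surface_def by auto

lemma inj_on_verts: "inj_on p (verts F)"
  using surface unfolding oriented_poly_surface_def by auto

lemma face_eq_if_cyc_edge:
  "f \<in> F \<Longrightarrow> g \<in> F \<Longrightarrow> (i, j) \<in> cyc_edges f \<Longrightarrow> (i, j) \<in> cyc_edges g \<Longrightarrow> f = g"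
  using surface unfolding oriented_poly_surface_def by metis

lemma reverse_edge_exists: "f \<in> F \<Longrightarrow> (i, j) \<in> cyc_edges f \<Longrightarrow> \<exists>g\<in>F. (j, i) \<in> cyc_edges g"
  using surface unfolding oriented_poly_surface_def by auto

lemma left_face_eq: "f \<in> F \<Longrightarrow> (i, j) \<in> cyc_edges f \<Longrightarrow> left_face F i j = f"
  unfolding left_face_def using face_eq_if_cyc_edge by blast

lemma right_face_eq: "f \<in> F \<Longrightarrow> (j, i) \<in> cyc_edges f \<Longrightarrow> right_face F i j = f"
  unfolding right_face_def using face_eq_if_cyc_edge by blast

lemma left_face_edge:
  assumes "(i, j) \<in> edges F"
  shows "left_face F i j \<in> F" and "(i, j) \<in> cyc_edges (left_face F i j)"
proof -
  obtain f where "f \<in> F" "(i, j) \<in> cyc_edges f"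
    using assms unfolding edges_def by blast
  then show "left_face F i j \<in> F" and "(i, j) \<in> cyc_edges (left_face F i j)"
    using left_face_eq by simp_all
qed

lemma right_face_edge:
  assumes "(i, j) \<in> edges F"
  shows "right_face F i j \<in> F" and "(j, i) \<in> cyc_edges (right_face F i j)"
proof -
  obtain f where "f \<in> F" "(i, j) \<in> cyc_edges f"
    using assms unfolding edges_def by blast
  then obtain g where "g \<in> F" "(j, i) \<in> cyc_edges g"
    using reverse_edge_exists by blast
  then show "right_face F i j \<in> F" and "(j, i) \<in> cyc_edges (right_face F i j)"
    using right_face_eq by simp_all
qed

lemma bij_betw_left_face: "bij_betw (left_face F i) {j. (i, j) \<in> edges F} {f \<in> F. i \<in> set f}"
proof (rule bij_betw_imageI)
  show "inj_on (left_face F i) {j. (i, j) \<in> edges F}"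
    using left_face_edge face_ok_if_face cyc_edges_out_unique
    by (intro inj_onI) (metis face_ok_def mem_Collect_eq)
  show "left_face F i ` {j. (i, j) \<in> edges F} = {f \<in> F. i \<in> set f}"
  proof
    show "left_face F i ` {j. (i, j) \<in> edges F} \<subseteq> {f \<in> F. i \<in> set f}"
      using left_face_edge cyc_edges_subset by blast
    show "{f \<in> F. i \<in> set f} \<subseteq> left_face F i ` {j. (i, j) \<in> edges F}"
    proof clarify
      fix f assume f: "f \<in> F" "i \<in> set f"
      then obtain j where "(i, j) \<in> cyc_edges f"
        using cyc_edges_out_exists by blast
      with f show "f \<in> left_face F i ` {j. (i, j) \<in> edges F}"
        using left_face_eq unfolding edges_def by force
    qed
  qed
qed

lemma bij_betw_right_face: "bij_betw (right_face F i) {j. (i, j) \<in> edges F} {f \<in> F. i \<in> set f}"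
proof (rule bij_betw_imageI)
  show "inj_on (right_face F i) {j. (i, j) \<in> edges F}"
    using right_face_edge face_ok_if_face cyc_edges_in_unique
    by (intro inj_onI) (metis face_ok_def mem_Collect_eq)
  show "right_face F i ` {j. (i, j) \<in> edges F} = {f \<in> F. i \<in> set f}"
  proof
    show "right_face F i ` {j. (i, j) \<in> edges F} \<subseteq> {f \<in> F. i \<in> set f}"
      using right_face_edge cyc_edges_subset by blast
    show "{f \<in> F. i \<in> set f} \<subseteq> right_face F i ` {j. (i, j) \<in> edges F}"
    proof clarify
      fix f assume f: "f \<in> F" "i \<in> set f"
      then obtain j where j: "(j, i) \<in> cyc_edges f"
        using cyc_edges_in_exists by blast
      then obtain g where "g \<in> F" "(i, j) \<in> cyc_edges g"
        using reverse_edge_exists f by blast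
      with f j show "f \<in> right_face F i ` {j. (i, j) \<in> edges F}"
        using right_face_eq unfolding edges_def by force
    qed
  qed
qed

lemma sum_right_face_minus_left_face:
  "(\<Sum>j\<in>{j. (i, j) \<in> edges F}. g (right_face F i j) - g (left_face F i j)) = (0 :: 'a::ab_group_add)"
  using sum.reindex_bij_betw[OF bij_betw_right_face, of g]
    sum.reindex_bij_betw[OF bij_betw_left_face, of g]
  by (simp add: sum_subtractf)

lemma lift_coeff_scaleR_cross:
  assumes nondeg: "proj_nondegenerate p F" and ij: "(i, j) \<in> edges F"
  shows "lift_coeff p F i j *\<^sub>R (p i \<times> p j)
           = face_pole p (right_face F i j) - face_pole p (left_face F i j)"
proof -
  define R L where "R = right_face F i j" and "L = left_face F i j"
  have R: "R \<in> F" "i \<in> set R" "j \<in> set R" and L: "L \<in> F" "i \<in> set L" "j \<in> set L"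
    using right_face_edge[OF ij] left_face_edge[OF ij] cyc_edges_subset
    unfolding R_def L_def by blast+
  have pole: "face_pole p f \<bullet> p v = 1" if "f \<in> F" "v \<in> set f" for f v
    using inner_face_pole face_ok_if_face nondeg that unfolding proj_nondegenerate_def by blast
  have "i \<noteq> j"
    using cyc_edges_neq left_face_edge[OF ij] face_ok_if_face unfolding face_ok_def by fastforce
  then have pij: "p i \<noteq> p j"
    using inj_on_verts edges_verts[OF ij] by (auto dest: inj_onD)
  have off_line: "\<exists>k. k \<in> set f \<and> p k \<notin> affine hull {p i, p j}" if "f \<in> F" for f
    using exists_off_line[of "p ` set f" "p i" "p j"] face_ok_if_face[OF that]
    unfolding face_ok_def by auto
  define k l where
    "k = (SOME k. k \<in> set R \<and> p k \<notin> affine hull {p i, p j})" and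
    "l = (SOME l. l \<in> set L \<and> p l \<notin> affine hull {p i, p j})"
  have k: "k \<in> set R" "p k \<notin> affine hull {p i, p j}"
    using someI_ex[OF off_line[OF R(1)]] unfolding k_def by blast+
  have l: "l \<in> set L" "p l \<notin> affine hull {p i, p j}"
    using someI_ex[OF off_line[OF L(1)]] unfolding l_def by blast+
  have "lift_coeff p F i j = omega (p i) (p j) (p k) (p l)"
    unfolding lift_coeff_def k_def l_def R_def L_def Let_def ..
  also have "\<dots> *\<^sub>R (p i \<times> p j) = face_pole p R - face_pole p L"
  proof (rule omega_scaleR_cross)
    show "det3 (p i) (p j) (p k) \<noteq> 0" "det3 (p i) (p j) (p l) \<noteq> 0"
      using det3_neq_0_off_line pole R L k l pij by metis+
  qed (use pole R L k l in auto)
  finally show ?thesis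
    unfolding R_def L_def .
qed

lemma projected_stress_term:
  assumes "proj_nondegenerate p F" and "P = {x. m \<bullet> x = 1}"
    and "\<forall>v\<in>verts F. m \<bullet> p v \<noteq> 0" and ij: "(i, j) \<in> edges F"
  shows "(proj_coeff P (p i) * proj_coeff P (p j) * lift_coeff p F i j) *\<^sub>R
           (proj_pt P (p i) - proj_pt P (p j))
         = m \<times> face_pole p (right_face F i j) - m \<times> face_pole p (left_face F i j)"
proof -
  have "(proj_coeff P (p i) * proj_coeff P (p j) * lift_coeff p F i j) *\<^sub>R
          (proj_pt P (p i) - proj_pt P (p j))
        = lift_coeff p F i j *\<^sub>R (m \<times> (p i \<times> p j))"
    using proj_coeff_mult_proj_pt_diff[of m "p i" "p j"] assms(2,3) edges_verts[OF ij]
    by (simp add: mult.commute flip: scaleR_scaleR)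
  also have "\<dots> = m \<times> (face_pole p (right_face F i j) - face_pole p (left_face F i j))"
    using lift_coeff_scaleR_cross[OF assms(1) ij] by (simp flip: cross_mult_right)
  finally show ?thesis
    by (simp add: Cross3.right_diff_distrib)
qed

end

lemma proper_projection_plane_eq_hyperplane:
  assumes "proper_projection_plane p F P"
  obtains m where "P = {x. m \<bullet> x = 1}" and "\<forall>v\<in>verts F. m \<bullet> p v \<noteq> 0"
proof -
  have "affine P" "aff_dim P = DIM(pt) - 1" "0 \<notin> P"
    using assms unfolding proper_projection_plane_def affine_plane_def by auto
  then obtain m where "m \<noteq> 0" and P: "P = {x. m \<bullet> x = 1}"
    using hyperplane_avoiding_origin[of P] by (metis affine_hull_eq)
  moreover have "\<forall>v\<in>verts F. m \<bullet> p v \<noteq> 0"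
    using inner_neq_0_if_not_parallel[OF \<open>m \<noteq> 0\<close>] assms P
    unfolding proper_projection_plane_def by blast
  ultimately show thesis
    using that by blast
qed

theorem theorem2p8:
  fixes p :: "nat \<Rightarrow> real ^ 3" and F :: "nat list set" and P :: "(real ^ 3) set"
  assumes "oriented_poly_surface p F"
    and "proj_nondegenerate p F"
    and "proper_projection_plane p F P"
  shows "\<forall>i\<in>verts F.
    (\<Sum>j\<in>{j. (i, j) \<in> edges F}.
       (proj_coeff P (p i) * proj_coeff P (p j) * lift_coeff p F i j) *\<^sub>R
         (proj_pt P (p i) - proj_pt P (p j))) = 0"
proof (intro ballI)
  fix i
  obtain m where P: "P = {x. m \<bullet> x = 1}" and "\<forall>v\<in>verts F. m \<bullet> p v \<noteq> 0"
    using proper_projection_plane_eq_hyperplane[OF assms(3)] .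
  then have "(proj_coeff P (p i) * proj_coeff P (p j) * lift_coeff p F i j) *\<^sub>R
               (proj_pt P (p i) - proj_pt P (p j))
             = m \<times> face_pole p (right_face F i j) - m \<times> face_pole p (left_face F i j)"
    if "(i, j) \<in> edges F" for j
    using projected_stress_term[OF assms(1,2) _ _ that] by blast
  then show "(\<Sum>j\<in>{j. (i, j) \<in> edges F}.
       (proj_coeff P (p i) * proj_coeff P (p j) * lift_coeff p F i j) *\<^sub>R
         (proj_pt P (p i) - proj_pt P (p j))) = 0"
    using sum_right_face_minus_left_face[OF assms(1), where g = "\<lambda>f. m \<times> face_pole p f"]
    by simp
qed

end
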